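(* Assume Assumptions 1 (randomization), 2 (monotonicity) and 3 (homogeneity), and the positivity conditions $P(R=r)>0$ and $0<P(Z=1\mid R=r)<1$ for every $r$, and $P(U=u)>0$ for $u\in\{ss,s\bar{s},\bar{s}\bar{s}\}$. Then, for $u\in\{ss,s\bar{s},\bar{s}\bar{s}\}$: (a) if Assumption 4(a) holds, then $P(Y=1\mid Z=1,U=u)$ is identifiable for every such $u$; (b) if Assumption 4(b) holds, then $P(Y=1\mid Z=0,U=u)$ is identifiable for every such $u$; (c) if both Assumptions 4(a) and 4(b) hold, then $ACE_u$ is identifiable for every such $u$. Here a quantity is identifiable if any two joint distributions of $(R,Z,S(1),S(0),Y(1),Y(0))$ that satisfy the stated assumptions and induce the same distribution of the observed vector $(R,Z,S,Y)$ give the same value of that quantity.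
   Context: Setting: there are $N_R$ trials. A unit is described by a random vector $(R,Z,S(1),S(0),Y(1),Y(0))$, where $R\in\{1,\dots,N_R\}$ is the trial number, $Z\in\{0,1\}$ the treatment assignment, and $S(z),Y(z)\in\{0,1\}$ the potential surrogate and potential endpoint under treatment $z$. Observed: $S=ZS(1)+(1-Z)S(0)$, $Y=ZY(1)+(1-Z)Y(0)$. Principal stratum $U=(S(1),S(0))$ with values $(1,1),(1,0),(0,1),(0,0)$ labeled $ss,s\bar{s},\bar{s}s,\bar{s}\bar{s}$. $\pi_{ur}=P(U=u\mid R=r)$. Assumption 1 (randomization): $Z\perp\!\!\!\perp\{S(1),S(0),Y(1),Y(0)\}\mid R$. Assumption 2 (monotonicity): $S(1)\ge S(0)$ almost surely (so $\pi_{\bar{s}s,r}=0$ for all $r$). Assumption 3 (homogeneity): $R\perp\!\!\!\perp Y(z)\mid U$ for $z=0,1$. Under Assumptions 1 and 3, $ACE_{ur}=E\{Y(1)-Y(0)\mid U=u,R=r\}$ does not depend on $r$ and is denoted $ACE_u$; it equals $P(Y=1\mid Z=1,U=u)-P(Y=1\mid Z=0,U=u)$. Assumption 4(a): there exist trials $r_1,r_2$ with $\pi_{ss,r_1}\pi_{s\bar{s},r_2}\neq\pi_{ss,r_2}\pi_{s\bar{s},r_1}$. Assumption 4(b): there exist trials $r_3,r_4$ with $\pi_{s\bar{s},r_3}\pi_{\bar{s}\bar{s},r_4}\neq\pi_{s\bar{s},r_4}\pi_{\bar{s}\bar{s},r_3}$. *)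

theory Defs
  imports Complex_Main
begin

text \<open>A joint distribution of (R, Z, S(1), S(0), Y(1), Y(0)) with R in {1..N} and the
other components binary (True = 1) is given by its probability mass function
p r z s1 s0 y1 y0.\<close>

type_synonym jdist = "nat \<Rightarrow> bool \<Rightarrow> bool \<Rightarrow> bool \<Rightarrow> bool \<Rightarrow> bool \<Rightarrow> real"
type_synonym event = "nat \<Rightarrow> bool \<Rightarrow> bool \<Rightarrow> bool \<Rightarrow> bool \<Rightarrow> bool \<Rightarrow> bool"

definition is_jdist :: "nat \<Rightarrow> jdist \<Rightarrow> bool" where
  "is_jdist N p \<longleftrightarrow>
     (\<forall>r z s1 s0 y1 y0. p r z s1 s0 y1 y0 \<ge> 0) \<and>
     (\<forall>r z s1 s0 y1 y0. r \<notin> {1..N} \<longrightarrow> p r z s1 s0 y1 y0 = 0) \<and>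
     (\<Sum>r\<in>{1..N}. \<Sum>z\<in>UNIV. \<Sum>s1\<in>UNIV. \<Sum>s0\<in>UNIV. \<Sum>y1\<in>UNIV. \<Sum>y0\<in>UNIV.
        p r z s1 s0 y1 y0) = 1"

definition Pr :: "nat \<Rightarrow> jdist \<Rightarrow> event \<Rightarrow> real" where
  "Pr N p E = (\<Sum>r\<in>{1..N}. \<Sum>z\<in>UNIV. \<Sum>s1\<in>UNIV. \<Sum>s0\<in>UNIV. \<Sum>y1\<in>UNIV. \<Sum>y0\<in>UNIV.
        (if E r z s1 s0 y1 y0 then p r z s1 s0 y1 y0 else 0))"

definition cPr :: "nat \<Rightarrow> jdist \<Rightarrow> event \<Rightarrow> event \<Rightarrow> real" where
  "cPr N p A B = Pr N p (\<lambda>r z s1 s0 y1 y0. A r z s1 s0 y1 y0 \<and> B r z s1 s0 y1 y0) / Pr N p B"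

definition obsS :: "bool \<Rightarrow> bool \<Rightarrow> bool \<Rightarrow> bool" where
  "obsS z s1 s0 = (if z then s1 else s0)"
definition obsY :: "bool \<Rightarrow> bool \<Rightarrow> bool \<Rightarrow> bool" where
  "obsY z y1 y0 = (if z then y1 else y0)"

definition obs_dist :: "nat \<Rightarrow> jdist \<Rightarrow> nat \<Rightarrow> bool \<Rightarrow> bool \<Rightarrow> bool \<Rightarrow> real" where
  "obs_dist N p r' z' s' y' = Pr N p (\<lambda>r z s1 s0 y1 y0.
      r = r' \<and> z = z' \<and> obsS z s1 s0 = s' \<and> obsY z y1 y0 = y')"

definition piU :: "nat \<Rightarrow> jdist \<Rightarrow> bool \<times> bool \<Rightarrow> nat \<Rightarrow> real" where
  "piU N p u r' = cPr N p (\<lambda>r z s1 s0 y1 y0. (s1, s0) = u) (\<lambda>r z s1 s0 y1 y0. r = r')"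

text \<open>Assumption 1: Z independent of (S(1),S(0),Y(1),Y(0)) given R (product form).\<close>
definition randomization :: "nat \<Rightarrow> jdist \<Rightarrow> bool" where
  "randomization N p \<longleftrightarrow> (\<forall>r' z' a b c d.
     Pr N p (\<lambda>r z s1 s0 y1 y0. r = r' \<and> z = z' \<and> s1 = a \<and> s0 = b \<and> y1 = c \<and> y0 = d)
       * Pr N p (\<lambda>r z s1 s0 y1 y0. r = r')
     = Pr N p (\<lambda>r z s1 s0 y1 y0. r = r' \<and> z = z')
       * Pr N p (\<lambda>r z s1 s0 y1 y0. r = r' \<and> s1 = a \<and> s0 = b \<and> y1 = c \<and> y0 = d))"

definition monotonicity :: "nat \<Rightarrow> jdist \<Rightarrow> bool" where
  "monotonicity N p \<longleftrightarrow> Pr N p (\<lambda>r z s1 s0 y1 y0. \<not> s1 \<and> s0) = 0"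

definition potY :: "bool \<Rightarrow> bool \<Rightarrow> bool \<Rightarrow> bool" where
  "potY zz y1 y0 = (if zz then y1 else y0)"

text \<open>Assumption 3: R independent of Y(z) given U, for z = 0, 1 (product form).\<close>
definition homogeneity :: "nat \<Rightarrow> jdist \<Rightarrow> bool" where
  "homogeneity N p \<longleftrightarrow> (\<forall>zz r' y' u.
     Pr N p (\<lambda>r z s1 s0 y1 y0. r = r' \<and> potY zz y1 y0 = y' \<and> (s1, s0) = u)
       * Pr N p (\<lambda>r z s1 s0 y1 y0. (s1, s0) = u)
     = Pr N p (\<lambda>r z s1 s0 y1 y0. r = r' \<and> (s1, s0) = u)
       * Pr N p (\<lambda>r z s1 s0 y1 y0. potY zz y1 y0 = y' \<and> (s1, s0) = u))"

definition strata3 :: "(bool \<times> bool) set" where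
  "strata3 = {(True, True), (True, False), (False, False)}"

definition positivity :: "nat \<Rightarrow> jdist \<Rightarrow> bool" where
  "positivity N p \<longleftrightarrow>
     (\<forall>r'\<in>{1..N}. Pr N p (\<lambda>r z s1 s0 y1 y0. r = r') > 0) \<and>
     (\<forall>r'\<in>{1..N}. 0 < cPr N p (\<lambda>r z s1 s0 y1 y0. z) (\<lambda>r z s1 s0 y1 y0. r = r') \<and>
                  cPr N p (\<lambda>r z s1 s0 y1 y0. z) (\<lambda>r z s1 s0 y1 y0. r = r') < 1) \<and>
     (\<forall>u\<in>strata3. Pr N p (\<lambda>r z s1 s0 y1 y0. (s1, s0) = u) > 0)"

definition base_assumptions :: "nat \<Rightarrow> jdist \<Rightarrow> bool" where
  "base_assumptions N p \<longleftrightarrow> is_jdist N p \<and> randomization N p \<and> monotonicity N p \<and>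
     homogeneity N p \<and> positivity N p"

definition assm4a :: "nat \<Rightarrow> jdist \<Rightarrow> bool" where
  "assm4a N p \<longleftrightarrow> (\<exists>r1\<in>{1..N}. \<exists>r2\<in>{1..N}.
     piU N p (True, True) r1 * piU N p (True, False) r2 \<noteq> piU N p (True, True) r2 * piU N p (True, False) r1)"

definition assm4b :: "nat \<Rightarrow> jdist \<Rightarrow> bool" where
  "assm4b N p \<longleftrightarrow> (\<exists>r3\<in>{1..N}. \<exists>r4\<in>{1..N}.
     piU N p (True, False) r3 * piU N p (False, False) r4 \<noteq> piU N p (True, False) r4 * piU N p (False, False) r3)"

definition PY :: "nat \<Rightarrow> jdist \<Rightarrow> bool \<Rightarrow> bool \<times> bool \<Rightarrow> real" where
  "PY N p zz u = cPr N p (\<lambda>r z s1 s0 y1 y0. obsY z y1 y0)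
                         (\<lambda>r z s1 s0 y1 y0. z = zz \<and> (s1, s0) = u)"

definition ACE :: "nat \<Rightarrow> jdist \<Rightarrow> bool \<times> bool \<Rightarrow> real" where
  "ACE N p u = cPr N p (\<lambda>r z s1 s0 y1 y0. y1) (\<lambda>r z s1 s0 y1 y0. (s1, s0) = u)
             - cPr N p (\<lambda>r z s1 s0 y1 y0. y0) (\<lambda>r z s1 s0 y1 y0. (s1, s0) = u)"

end

theory Submission
  imports Defs
begin

text \<open>Within a trial, randomization makes each arm Z = z a random sample of the potential
pair (S(z), Y(z)), so the law of (S(z), Y(z)) given R = r is read off the observed data. Under
monotonicity S(0) = 1 singles out the stratum U = (1,1) and S(1) = 0 the stratum U = (0,0),
which identifies the proportions pi(u, r); by homogeneity the cells with Y(z) = 1 are mixtures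
of the stratum means E(Y(z) | U = u) with weights pi(u, r) that vary with the trial r while the
means do not. Two trials give a linear system for the two means sharing a cell, nonsingular by
Assumption 4; the mean of the remaining stratum is a single ratio. Randomization and
homogeneity also give P(Y = 1 | Z = z, U = u) = E(Y(z) | U = u), and ACE is the difference of
two such means.\<close>

lemma sum_UNIV_bool: "(\<Sum>b\<in>(UNIV::bool set). f b) = f True + f False"
  by (simp add: UNIV_bool add.commute)

definition trial_prob ::
    "jdist \<Rightarrow> nat \<Rightarrow> (bool \<Rightarrow> bool \<Rightarrow> bool \<Rightarrow> bool \<Rightarrow> bool \<Rightarrow> bool) \<Rightarrow> real" where
  "trial_prob p r E = (\<Sum>z\<in>UNIV. \<Sum>s1\<in>UNIV. \<Sum>s0\<in>UNIV. \<Sum>y1\<in>UNIV. \<Sum>y0\<in>UNIV.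
        (if E z s1 s0 y1 y0 then p r z s1 s0 y1 y0 else 0))"

abbreviation trial_total :: "jdist \<Rightarrow> nat \<Rightarrow> real" where
  "trial_total p r \<equiv> trial_prob p r (\<lambda>_ _ _ _ _. True)"

abbreviation stratum_prob :: "jdist \<Rightarrow> nat \<Rightarrow> bool \<times> bool \<Rightarrow> real" where
  "stratum_prob p r u \<equiv> trial_prob p r (\<lambda>_ s1 s0 _ _. (s1, s0) = u)"

abbreviation arm_prob :: "jdist \<Rightarrow> nat \<Rightarrow> bool \<Rightarrow> real" where
  "arm_prob p r zz \<equiv> trial_prob p r (\<lambda>z _ _ _ _. z = zz)"

definition mean_potY :: "nat \<Rightarrow> jdist \<Rightarrow> bool \<Rightarrow> bool \<times> bool \<Rightarrow> real" where
  "mean_potY N p zz u = cPr N p (\<lambda>r z s1 s0 y1 y0. potY zz y1 y0) (\<lambda>r z s1 s0 y1 y0. (s1, s0) = u)"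

text \<open>For fixed zz, obsS zz and obsY zz are the potential outcomes S(zz) and Y(zz), so this is
P(S(zz) = s, Y(zz) = y | R = r).\<close>

definition potential_cell :: "jdist \<Rightarrow> nat \<Rightarrow> bool \<Rightarrow> bool \<Rightarrow> bool \<Rightarrow> real" where
  "potential_cell p r zz s y =
     trial_prob p r (\<lambda>_ s1 s0 y1 y0. obsS zz s1 s0 = s \<and> obsY zz y1 y0 = y) / trial_total p r"

lemma Pr_eq_sum_trial_prob: "Pr N p E = (\<Sum>r\<in>{1..N}. trial_prob p r (E r))"
  by (simp add: Pr_def trial_prob_def)

lemma Pr_eq_trial_prob:
  assumes "r' \<in> {1..N}"
    and "\<And>r z s1 s0 y1 y0. E' r z s1 s0 y1 y0 \<longleftrightarrow> r = r' \<and> E z s1 s0 y1 y0"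
  shows "Pr N p E' = trial_prob p r' E"
proof -
  have "Pr N p E' = (\<Sum>r\<in>{1..N}. if r = r' then trial_prob p r' E else 0)"
    unfolding Pr_eq_sum_trial_prob by (rule sum.cong) (auto simp: trial_prob_def assms(2))
  also have "\<dots> = trial_prob p r' E" using assms(1) by simp
  finally show ?thesis .
qed

lemma Pr_eq_point_mass:
  assumes "r' \<in> {1..N}"
  shows "Pr N p (\<lambda>r z s1 s0 y1 y0. r = r' \<and> z = z' \<and> s1 = a \<and> s0 = b \<and> y1 = c \<and> y0 = d)
       = p r' z' a b c d"
proof -
  have "Pr N p (\<lambda>r z s1 s0 y1 y0. r = r' \<and> z = z' \<and> s1 = a \<and> s0 = b \<and> y1 = c \<and> y0 = d)
      = trial_prob p r' (\<lambda>z s1 s0 y1 y0. z = z' \<and> s1 = a \<and> s0 = b \<and> y1 = c \<and> y0 = d)"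
    by (rule Pr_eq_trial_prob[OF assms]) simp
  also have "\<dots> = p r' z' a b c d"
    by (cases z'; cases a; cases b; cases c; cases d) (simp_all add: trial_prob_def sum_UNIV_bool)
  finally show ?thesis .
qed

lemma linear_system_2x2_unique:
  fixes a1 b1 a2 b2 x y x' y' :: "'a :: field"
  assumes "a1 * x + b1 * y = a1 * x' + b1 * y'" and "a2 * x + b2 * y = a2 * x' + b2 * y'"
    and "a1 * b2 \<noteq> a2 * b1"
  shows "x = x' \<and> y = y'"
proof -
  have "(x - x') * (a1 * b2 - a2 * b1) = b2 * (a1 * x + b1 * y - (a1 * x' + b1 * y'))
      - b1 * (a2 * x + b2 * y - (a2 * x' + b2 * y'))"
    by (simp add: algebra_simps)
  then have "(x - x') * (a1 * b2 - a2 * b1) = 0" using assms(1,2) by simp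
  moreover have "(y - y') * (a1 * b2 - a2 * b1) = a1 * (a2 * x + b2 * y - (a2 * x' + b2 * y'))
      - a2 * (a1 * x + b1 * y - (a1 * x' + b1 * y'))"
    by (simp add: algebra_simps)
  then have "(y - y') * (a1 * b2 - a2 * b1) = 0" using assms(1,2) by simp
  ultimately show ?thesis using assms(3) by simp
qed

lemma strata3_members: "(True, True) \<in> strata3" "(True, False) \<in> strata3" "(False, False) \<in> strata3"
  by (simp_all add: strata3_def)

locale surrogate_model =
  fixes N :: nat and p :: jdist
  assumes base: "base_assumptions N p"
begin

lemma nonneg: "p r z a b c d \<ge> 0"
  using base by (auto simp: base_assumptions_def is_jdist_def)

lemma trial_prob_nonneg: "trial_prob p r E \<ge> 0"
  unfolding trial_prob_def by (intro sum_nonneg) (auto simp: nonneg)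

lemma no_defiers:
  assumes "r \<in> {1..N}" shows "p r z False True c d = 0"
proof -
  have "Pr N p (\<lambda>r z s1 s0 y1 y0. \<not> s1 \<and> s0) = 0"
    using base by (simp add: base_assumptions_def monotonicity_def)
  then have "trial_prob p r (\<lambda>z s1 s0 y1 y0. \<not> s1 \<and> s0) = 0"
    using assms by (simp add: Pr_eq_sum_trial_prob sum_nonneg_eq_0_iff trial_prob_nonneg)
  moreover have "p r z False True c d \<le> trial_prob p r (\<lambda>z s1 s0 y1 y0. \<not> s1 \<and> s0)"
    using nonneg[of r] by (cases z; cases c; cases d; simp add: trial_prob_def sum_UNIV_bool)
  ultimately show ?thesis using nonneg[of r z False True c d] by simp
qed

lemma positivity: "positivity N p"
  using base by (simp add: base_assumptions_def)

lemma trial_total_pos: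
  assumes "r \<in> {1..N}" shows "trial_total p r > 0"
proof -
  have "Pr N p (\<lambda>r' z s1 s0 y1 y0. r' = r) = trial_total p r"
    by (rule Pr_eq_trial_prob[OF assms]) simp
  moreover have "\<forall>r'\<in>{1..N}. 0 < Pr N p (\<lambda>r z s1 s0 y1 y0. r = r')"
    using positivity unfolding positivity_def by blast
  ultimately show ?thesis using assms by (metis (no_types))
qed

lemma arm_prob_pos:
  assumes "r \<in> {1..N}" shows "arm_prob p r zz > 0"
proof -
  have "Pr N p (\<lambda>r' z s1 s0 y1 y0. r' = r) = trial_total p r"
    by (rule Pr_eq_trial_prob[OF assms]) simp
  moreover have "Pr N p (\<lambda>r' z s1 s0 y1 y0. z \<and> r' = r) = arm_prob p r True"
    by (rule Pr_eq_trial_prob[OF assms]) auto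
  moreover have split: "trial_total p r = arm_prob p r True + arm_prob p r False"
    by (simp add: trial_prob_def sum_UNIV_bool)
  moreover have "\<forall>r'\<in>{1..N}. 0 < cPr N p (\<lambda>r z s1 s0 y1 y0. z) (\<lambda>r z s1 s0 y1 y0. r = r') \<and>
      cPr N p (\<lambda>r z s1 s0 y1 y0. z) (\<lambda>r z s1 s0 y1 y0. r = r') < 1"
    using positivity unfolding positivity_def by blast
  ultimately have "0 < arm_prob p r True / trial_total p r \<and> arm_prob p r True / trial_total p r < 1"
    using assms unfolding cPr_def by (metis (no_types, lifting))
  then show ?thesis
    using trial_total_pos[OF assms] split
    by (cases zz) (auto simp: divide_less_eq zero_less_divide_iff)
qed

lemma randomization_pointwise:
  assumes r: "r \<in> {1..N}"
  shows "p r zz a b c d * trial_total p r = arm_prob p r zz * (p r True a b c d + p r False a b c d)"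
proof -
  have "Pr N p (\<lambda>r' z s1 s0 y1 y0. r' = r \<and> z = zz \<and> s1 = a \<and> s0 = b \<and> y1 = c \<and> y0 = d)
       * Pr N p (\<lambda>r' z s1 s0 y1 y0. r' = r)
     = Pr N p (\<lambda>r' z s1 s0 y1 y0. r' = r \<and> z = zz)
       * Pr N p (\<lambda>r' z s1 s0 y1 y0. r' = r \<and> s1 = a \<and> s0 = b \<and> y1 = c \<and> y0 = d)"
    using base unfolding base_assumptions_def randomization_def by blast
  moreover have "Pr N p (\<lambda>r' z s1 s0 y1 y0. r' = r) = trial_total p r"
    by (rule Pr_eq_trial_prob[OF r]) simp
  moreover have "Pr N p (\<lambda>r' z s1 s0 y1 y0. r' = r \<and> z = zz) = arm_prob p r zz"
    by (rule Pr_eq_trial_prob[OF r]) simp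
  moreover have "Pr N p (\<lambda>r' z s1 s0 y1 y0. r' = r \<and> s1 = a \<and> s0 = b \<and> y1 = c \<and> y0 = d)
      = trial_prob p r (\<lambda>z s1 s0 y1 y0. s1 = a \<and> s0 = b \<and> y1 = c \<and> y0 = d)"
    by (rule Pr_eq_trial_prob[OF r]) simp
  moreover have "trial_prob p r (\<lambda>z s1 s0 y1 y0. s1 = a \<and> s0 = b \<and> y1 = c \<and> y0 = d)
      = p r True a b c d + p r False a b c d"
    by (cases a; cases b; cases c; cases d) (simp_all add: trial_prob_def sum_UNIV_bool)
  ultimately show ?thesis by (simp add: Pr_eq_point_mass[OF r])
qed

lemma trial_prob_arm:
  assumes r: "r \<in> {1..N}"
  shows "trial_prob p r (\<lambda>z s1 s0 y1 y0. z = zz \<and> E s1 s0 y1 y0)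
       = arm_prob p r zz / trial_total p r * trial_prob p r (\<lambda>_ s1 s0 y1 y0. E s1 s0 y1 y0)"
proof -
  have "trial_prob p r (\<lambda>z s1 s0 y1 y0. z = zz \<and> E s1 s0 y1 y0) =
      (\<Sum>s1\<in>UNIV. \<Sum>s0\<in>UNIV. \<Sum>y1\<in>UNIV. \<Sum>y0\<in>UNIV.
         if E s1 s0 y1 y0 then p r zz s1 s0 y1 y0 else 0)"
    by (cases zz) (simp_all add: trial_prob_def sum_UNIV_bool)
  moreover have "trial_prob p r (\<lambda>_ s1 s0 y1 y0. E s1 s0 y1 y0) =
      (\<Sum>s1\<in>UNIV. \<Sum>s0\<in>UNIV. \<Sum>y1\<in>UNIV. \<Sum>y0\<in>UNIV.
         if E s1 s0 y1 y0 then p r True s1 s0 y1 y0 + p r False s1 s0 y1 y0 else 0)"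
    by (simp add: trial_prob_def sum_UNIV_bool)
  ultimately have "trial_prob p r (\<lambda>z s1 s0 y1 y0. z = zz \<and> E s1 s0 y1 y0) * trial_total p r
      = arm_prob p r zz * trial_prob p r (\<lambda>_ s1 s0 y1 y0. E s1 s0 y1 y0)"
    by (simp add: sum_distrib_left sum_distrib_right)
      (intro sum.cong refl, simp add: randomization_pointwise[OF r])
  then show ?thesis using trial_total_pos[OF r] by (simp add: field_simps)
qed

lemma stratum_pos: "u \<in> strata3 \<Longrightarrow> Pr N p (\<lambda>r z s1 s0 y1 y0. (s1, s0) = u) > 0"
  using positivity by (simp add: positivity_def)

lemma piU_eq_stratum_prob:
  assumes r: "r \<in> {1..N}" shows "piU N p u r = stratum_prob p r u / trial_total p r"
proof -
  have "Pr N p (\<lambda>r' z s1 s0 y1 y0. (s1, s0) = u \<and> r' = r) = stratum_prob p r u"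
    by (rule Pr_eq_trial_prob[OF r]) auto
  moreover have "Pr N p (\<lambda>r' z s1 s0 y1 y0. r' = r) = trial_total p r"
    by (rule Pr_eq_trial_prob[OF r]) simp
  ultimately show ?thesis by (simp add: piU_def cPr_def)
qed

lemma trial_prob_potY_stratum:
  assumes r: "r \<in> {1..N}" and u: "u \<in> strata3"
  shows "trial_prob p r (\<lambda>_ s1 s0 y1 y0. potY zz y1 y0 \<and> (s1, s0) = u)
       = stratum_prob p r u * mean_potY N p zz u"
proof -
  have "Pr N p (\<lambda>r' z s1 s0 y1 y0. r' = r \<and> potY zz y1 y0 = True \<and> (s1, s0) = u)
       * Pr N p (\<lambda>r z s1 s0 y1 y0. (s1, s0) = u)
     = Pr N p (\<lambda>r' z s1 s0 y1 y0. r' = r \<and> (s1, s0) = u)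
       * Pr N p (\<lambda>r z s1 s0 y1 y0. potY zz y1 y0 = True \<and> (s1, s0) = u)"
    using base unfolding base_assumptions_def homogeneity_def by blast
  moreover have "Pr N p (\<lambda>r' z s1 s0 y1 y0. r' = r \<and> potY zz y1 y0 = True \<and> (s1, s0) = u)
      = trial_prob p r (\<lambda>_ s1 s0 y1 y0. potY zz y1 y0 \<and> (s1, s0) = u)"
    by (rule Pr_eq_trial_prob[OF r]) simp
  moreover have "Pr N p (\<lambda>r' z s1 s0 y1 y0. r' = r \<and> (s1, s0) = u) = stratum_prob p r u"
    by (rule Pr_eq_trial_prob[OF r]) simp
  ultimately show ?thesis
    using stratum_pos[OF u] by (simp add: mean_potY_def cPr_def field_simps)
qed

lemma PY_eq_mean_potY:
  assumes u: "u \<in> strata3" shows "PY N p zz u = mean_potY N p zz u"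
proof -
  define w where "w r = arm_prob p r zz / trial_total p r * stratum_prob p r u" for r
  have event: "(\<lambda>z s1 s0 y1 y0. obsY z y1 y0 \<and> z = zz \<and> (s1, s0) = u)
      = (\<lambda>z s1 s0 y1 y0. z = zz \<and> (potY zz y1 y0 \<and> (s1, s0) = u))"
    by (auto simp: fun_eq_iff obsY_def potY_def)
  have "PY N p zz u = (\<Sum>r\<in>{1..N}. w r * mean_potY N p zz u) / (\<Sum>r\<in>{1..N}. w r)"
    unfolding PY_def cPr_def Pr_eq_sum_trial_prob event
    by (intro arg_cong2[where f = "(/)"] sum.cong refl)
      (simp_all add: trial_prob_arm trial_prob_potY_stratum u w_def)
  moreover have "(\<Sum>r\<in>{1..N}. w r) > 0"
  proof -
    have "(\<Sum>r\<in>{1..N}. stratum_prob p r u) > 0"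
      using stratum_pos[OF u] by (simp add: Pr_eq_sum_trial_prob)
    then obtain r where r: "r \<in> {1..N}" "stratum_prob p r u > 0"
      by (metis not_less sum_nonpos)
    show ?thesis
      by (rule sum_pos2[OF _ r(1)])
        (use r arm_prob_pos trial_total_pos trial_prob_nonneg in \<open>auto simp: w_def\<close>)
  qed
  ultimately show ?thesis by (simp add: sum_distrib_right[symmetric])
qed

lemma obs_dist_eq_trial_prob:
  assumes r: "r \<in> {1..N}"
  shows "obs_dist N p r zz s y
       = trial_prob p r (\<lambda>z s1 s0 y1 y0. z = zz \<and> (obsS zz s1 s0 = s \<and> obsY zz y1 y0 = y))"
  unfolding obs_dist_def by (rule Pr_eq_trial_prob[OF r]) auto

lemma sum_potential_cell:
  assumes r: "r \<in> {1..N}" shows "(\<Sum>s\<in>UNIV. \<Sum>y\<in>UNIV. potential_cell p r zz s y) = 1"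
proof -
  have "(\<Sum>s\<in>UNIV. \<Sum>y\<in>UNIV.
      trial_prob p r (\<lambda>_ s1 s0 y1 y0. obsS zz s1 s0 = s \<and> obsY zz y1 y0 = y)) = trial_total p r"
    by (cases zz) (simp_all add: trial_prob_def sum_UNIV_bool obsS_def obsY_def)
  then show ?thesis
    using trial_total_pos[OF r] by (simp add: potential_cell_def flip: sum_divide_distrib)
qed

lemma potential_cell_identified:
  assumes r: "r \<in> {1..N}"
  shows "potential_cell p r zz s y
       = obs_dist N p r zz s y / (\<Sum>s'\<in>UNIV. \<Sum>y'\<in>UNIV. obs_dist N p r zz s' y')"
proof -
  have obs: "obs_dist N p r zz s' y' = arm_prob p r zz * potential_cell p r zz s' y'" for s' y'
    by (simp add: obs_dist_eq_trial_prob[OF r] trial_prob_arm[OF r] potential_cell_def)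
  show ?thesis
    using arm_prob_pos[OF r, of zz]
    by (simp add: obs sum_potential_cell[OF r] flip: sum_distrib_left)
qed

lemma piU_TT:
  assumes r: "r \<in> {1..N}"
  shows "piU N p (True, True) r = potential_cell p r False True True + potential_cell p r False True False"
proof -
  have "stratum_prob p r (True, True)
      = trial_prob p r (\<lambda>_ s1 s0 y1 y0. obsS False s1 s0 = True \<and> obsY False y1 y0 = True)
      + trial_prob p r (\<lambda>_ s1 s0 y1 y0. obsS False s1 s0 = True \<and> obsY False y1 y0 = False)"
    by (simp add: trial_prob_def sum_UNIV_bool obsS_def obsY_def no_defiers[OF r])
  then show ?thesis by (simp add: piU_eq_stratum_prob[OF r] potential_cell_def add_divide_distrib)
qed

lemma piU_FF:
  assumes r: "r \<in> {1..N}"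
  shows "piU N p (False, False) r = potential_cell p r True False True + potential_cell p r True False False"
proof -
  have "stratum_prob p r (False, False)
      = trial_prob p r (\<lambda>_ s1 s0 y1 y0. obsS True s1 s0 = False \<and> obsY True y1 y0 = True)
      + trial_prob p r (\<lambda>_ s1 s0 y1 y0. obsS True s1 s0 = False \<and> obsY True y1 y0 = False)"
    by (simp add: trial_prob_def sum_UNIV_bool obsS_def obsY_def no_defiers[OF r])
  then show ?thesis by (simp add: piU_eq_stratum_prob[OF r] potential_cell_def add_divide_distrib)
qed

lemma piU_TF:
  assumes r: "r \<in> {1..N}"
  shows "piU N p (True, False) r
       = potential_cell p r True True True + potential_cell p r True True False - piU N p (True, True) r"
proof -
  have "stratum_prob p r (True, False)
      = trial_prob p r (\<lambda>_ s1 s0 y1 y0. obsS True s1 s0 = True \<and> obsY True y1 y0 = True)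
      + trial_prob p r (\<lambda>_ s1 s0 y1 y0. obsS True s1 s0 = True \<and> obsY True y1 y0 = False)
      - stratum_prob p r (True, True)"
    by (simp add: trial_prob_def sum_UNIV_bool obsS_def obsY_def)
  then show ?thesis
    by (simp add: piU_eq_stratum_prob[OF r] potential_cell_def add_divide_distrib diff_divide_distrib)
qed

lemma cond_trial_prob_potY_stratum:
  assumes r: "r \<in> {1..N}" and u: "u \<in> strata3"
  shows "trial_prob p r (\<lambda>_ s1 s0 y1 y0. potY zz y1 y0 \<and> (s1, s0) = u) / trial_total p r
       = piU N p u r * mean_potY N p zz u"
  by (simp add: trial_prob_potY_stratum[OF r u] piU_eq_stratum_prob[OF r])

lemma mixture_treated_S1:
  assumes r: "r \<in> {1..N}"
  shows "potential_cell p r True True True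
       = piU N p (True, True) r * mean_potY N p True (True, True)
       + piU N p (True, False) r * mean_potY N p True (True, False)"
proof -
  have "trial_prob p r (\<lambda>_ s1 s0 y1 y0. obsS True s1 s0 = True \<and> obsY True y1 y0 = True)
      = trial_prob p r (\<lambda>_ s1 s0 y1 y0. potY True y1 y0 \<and> (s1, s0) = (True, True))
      + trial_prob p r (\<lambda>_ s1 s0 y1 y0. potY True y1 y0 \<and> (s1, s0) = (True, False))"
    by (simp add: trial_prob_def sum_UNIV_bool obsS_def obsY_def potY_def)
  then show ?thesis
    using cond_trial_prob_potY_stratum[OF r strata3_members(1), of True]
      cond_trial_prob_potY_stratum[OF r strata3_members(2), of True]
    by (simp add: potential_cell_def add_divide_distrib)
qed

lemma mixture_treated_S0:
  assumes r: "r \<in> {1..N}"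
  shows "potential_cell p r True False True = piU N p (False, False) r * mean_potY N p True (False, False)"
proof -
  have "trial_prob p r (\<lambda>_ s1 s0 y1 y0. obsS True s1 s0 = False \<and> obsY True y1 y0 = True)
      = trial_prob p r (\<lambda>_ s1 s0 y1 y0. potY True y1 y0 \<and> (s1, s0) = (False, False))"
    by (simp add: trial_prob_def sum_UNIV_bool obsS_def obsY_def potY_def no_defiers[OF r])
  then show ?thesis
    using cond_trial_prob_potY_stratum[OF r strata3_members(3), of True]
    by (simp add: potential_cell_def)
qed

lemma mixture_control_S1:
  assumes r: "r \<in> {1..N}"
  shows "potential_cell p r False True True = piU N p (True, True) r * mean_potY N p False (True, True)"
proof -
  have "trial_prob p r (\<lambda>_ s1 s0 y1 y0. obsS False s1 s0 = True \<and> obsY False y1 y0 = True)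
      = trial_prob p r (\<lambda>_ s1 s0 y1 y0. potY False y1 y0 \<and> (s1, s0) = (True, True))"
    by (simp add: trial_prob_def sum_UNIV_bool obsS_def obsY_def potY_def no_defiers[OF r])
  then show ?thesis
    using cond_trial_prob_potY_stratum[OF r strata3_members(1), of False]
    by (simp add: potential_cell_def)
qed

lemma mixture_control_S0:
  assumes r: "r \<in> {1..N}"
  shows "potential_cell p r False False True
       = piU N p (True, False) r * mean_potY N p False (True, False)
       + piU N p (False, False) r * mean_potY N p False (False, False)"
proof -
  have "trial_prob p r (\<lambda>_ s1 s0 y1 y0. obsS False s1 s0 = False \<and> obsY False y1 y0 = True)
      = trial_prob p r (\<lambda>_ s1 s0 y1 y0. potY False y1 y0 \<and> (s1, s0) = (True, False))
      + trial_prob p r (\<lambda>_ s1 s0 y1 y0. potY False y1 y0 \<and> (s1, s0) = (False, False))"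
    by (simp add: trial_prob_def sum_UNIV_bool obsS_def obsY_def potY_def)
  then show ?thesis
    using cond_trial_prob_potY_stratum[OF r strata3_members(2), of False]
      cond_trial_prob_potY_stratum[OF r strata3_members(3), of False]
    by (simp add: potential_cell_def add_divide_distrib)
qed

lemma exists_trial_piU_pos:
  assumes u: "u \<in> strata3" shows "\<exists>r\<in>{1..N}. piU N p u r > 0"
proof -
  have "(\<Sum>r\<in>{1..N}. stratum_prob p r u) > 0"
    using stratum_pos[OF u] by (simp add: Pr_eq_sum_trial_prob)
  then obtain r where r: "r \<in> {1..N}" "stratum_prob p r u > 0"
    by (metis not_less sum_nonpos)
  then have "piU N p u r > 0"
    using trial_total_pos[OF r(1)] by (simp add: piU_eq_stratum_prob)
  with r(1) show ?thesis ..
qed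

end

lemma ACE_eq_mean_potY: "ACE N p u = mean_potY N p True u - mean_potY N p False u"
  by (simp add: ACE_def mean_potY_def potY_def)

locale observationally_equivalent = P: surrogate_model N p + Q: surrogate_model N q
  for N :: nat and p q :: jdist +
  assumes obs_eq: "obs_dist N p = obs_dist N q"
begin

lemma potential_cell_eq:
  assumes r: "r \<in> {1..N}" shows "potential_cell p r zz s y = potential_cell q r zz s y"
  using P.potential_cell_identified[OF r] Q.potential_cell_identified[OF r] by (simp add: obs_eq)

lemma piU_eq:
  assumes r: "r \<in> {1..N}" and u: "u \<in> strata3" shows "piU N p u r = piU N q u r"
  using u P.piU_TT[OF r] Q.piU_TT[OF r] P.piU_TF[OF r] Q.piU_TF[OF r] P.piU_FF[OF r] Q.piU_FF[OF r]
  by (auto simp: strata3_def potential_cell_eq[OF r])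

lemma mean_potY_True_FF_eq: "mean_potY N p True (False, False) = mean_potY N q True (False, False)"
proof -
  obtain r where r: "r \<in> {1..N}" and pos: "piU N p (False, False) r > 0"
    using P.exists_trial_piU_pos[OF strata3_members(3)] by blast
  show ?thesis
    using P.mixture_treated_S0[OF r] Q.mixture_treated_S0[OF r] pos
    by (simp add: potential_cell_eq[OF r] piU_eq[OF r strata3_members(3)])
qed

lemma mean_potY_False_TT_eq: "mean_potY N p False (True, True) = mean_potY N q False (True, True)"
proof -
  obtain r where r: "r \<in> {1..N}" and pos: "piU N p (True, True) r > 0"
    using P.exists_trial_piU_pos[OF strata3_members(1)] by blast
  show ?thesis
    using P.mixture_control_S1[OF r] Q.mixture_control_S1[OF r] pos
    by (simp add: potential_cell_eq[OF r] piU_eq[OF r strata3_members(1)])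
qed

lemma mean_potY_True_eq:
  assumes "assm4a N p" and u: "u \<in> strata3"
  shows "mean_potY N p True u = mean_potY N q True u"
proof -
  obtain r1 r2 where r: "r1 \<in> {1..N}" "r2 \<in> {1..N}"
    and det: "piU N p (True, True) r1 * piU N p (True, False) r2
              \<noteq> piU N p (True, True) r2 * piU N p (True, False) r1"
    using assms(1) unfolding assm4a_def by blast
  have "piU N p (True, True) r * mean_potY N p True (True, True)
        + piU N p (True, False) r * mean_potY N p True (True, False)
      = piU N p (True, True) r * mean_potY N q True (True, True)
        + piU N p (True, False) r * mean_potY N q True (True, False)"
    if "r \<in> {1..N}" for r
    using P.mixture_treated_S1[OF that] Q.mixture_treated_S1[OF that]
    by (simp add: potential_cell_eq[OF that]
        piU_eq[OF that strata3_members(1)] piU_eq[OF that strata3_members(2)])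
  from linear_system_2x2_unique[OF this[OF r(1)] this[OF r(2)] det]
  show ?thesis using u mean_potY_True_FF_eq by (auto simp: strata3_def)
qed

lemma mean_potY_False_eq:
  assumes "assm4b N p" and u: "u \<in> strata3"
  shows "mean_potY N p False u = mean_potY N q False u"
proof -
  obtain r3 r4 where r: "r3 \<in> {1..N}" "r4 \<in> {1..N}"
    and det: "piU N p (True, False) r3 * piU N p (False, False) r4
              \<noteq> piU N p (True, False) r4 * piU N p (False, False) r3"
    using assms(1) unfolding assm4b_def by blast
  have "piU N p (True, False) r * mean_potY N p False (True, False)
        + piU N p (False, False) r * mean_potY N p False (False, False)
      = piU N p (True, False) r * mean_potY N q False (True, False)
        + piU N p (False, False) r * mean_potY N q False (False, False)"
    if "r \<in> {1..N}" for r
    using P.mixture_control_S0[OF that] Q.mixture_control_S0[OF that]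
    by (simp add: potential_cell_eq[OF that]
        piU_eq[OF that strata3_members(2)] piU_eq[OF that strata3_members(3)])
  from linear_system_2x2_unique[OF this[OF r(1)] this[OF r(2)] det]
  show ?thesis using u mean_potY_False_TT_eq by (auto simp: strata3_def)
qed

end

theorem theorem1:
  fixes N :: nat and p q :: jdist
  assumes "base_assumptions N p" and "base_assumptions N q"
    and "obs_dist N p = obs_dist N q"
  shows "(assm4a N p \<and> assm4a N q \<longrightarrow> (\<forall>u\<in>strata3. PY N p True u = PY N q True u))
       \<and> (assm4b N p \<and> assm4b N q \<longrightarrow> (\<forall>u\<in>strata3. PY N p False u = PY N q False u))
       \<and> (assm4a N p \<and> assm4a N q \<and> assm4b N p \<and> assm4b N q \<longrightarrow>
            (\<forall>u\<in>strata3. ACE N p u = ACE N q u))"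
proof -
  interpret observationally_equivalent N p q
    by unfold_locales (fact assms)+
  show ?thesis
    using P.PY_eq_mean_potY Q.PY_eq_mean_potY mean_potY_True_eq mean_potY_False_eq
    by (simp add: ACE_eq_mean_potY)
qed

end
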